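(* Let $(P,h)$ be a floor plan with $P=(p_1,\dots,p_r)$. Suppose there exists $i$ such that $x(p_i)>0$ and, for all $j$ with $x(p_j)=x(p_i)-1$, we have $y(p_j)<y(p_i)$. Let $P'=(p'_1,\dots,p'_r)$ with $p'_i=p_i-(1,0)$ and $p'_k=p_k$ for $k\neq i$. Then $(P',h)<(P,h)$, i.e. $\lambda_{(P',h)}\subsetneq\lambda_{(P,h)}$.
   Context: For $p\in\mathbb{N}^2$, $x(p)$ and $y(p)$ denote its coordinates. A floor plan is a pair $(P,h)$ of sequences $P=(p_1,\dots,p_r)$ with $p_i\in\mathbb{N}^2$ and $h=(h_1,\dots,h_r)$ with $h_i$ positive integers. A North-East path is a sequence $(q_1,\dots,q_m)$ in $\mathbb{N}^2$ with $q_{j+1}-q_j\in\{(1,0),(0,1)\}$, originating at $q_1$; its score w.r.t. $(P,h)$ is $\sum_{i:\,p_i\in\{q_1,\dots,q_m\}}h_i$, and $\max\mathrm{score}_{(P,h)}(q)$ is the maximal score of a path originating at $q$. $\lambda_{(P,h)}\subseteq\mathbb{N}^3$ is the $3$-dimensional Young diagram $\{(x,y,z): 0\le z<\max\mathrm{score}_{(P,h)}(x,y)\}$. For floor plans with the same $h$, $(P',h)\le(P,h)$ means $\lambda_{(P',h)}\subseteq\lambda_{(P,h)}$, and $<$ means $\le$ with $\lambda_{(P',h)}\ne\lambda_{(P,h)}$. *)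

theory Defs
  imports Main
begin

type_synonym point = "nat \<times> nat"

definition floor_plan :: "point list \<Rightarrow> nat list \<Rightarrow> bool" where
  "floor_plan P h \<longleftrightarrow> length h = length P \<and> (\<forall>k < length h. h ! k > 0)"

definition NE_path :: "point list \<Rightarrow> bool" where
  "NE_path qs \<longleftrightarrow> qs \<noteq> [] \<and>
     (\<forall>j. Suc j < length qs \<longrightarrow>
        qs ! Suc j = (fst (qs ! j) + 1, snd (qs ! j)) \<or>
        qs ! Suc j = (fst (qs ! j), snd (qs ! j) + 1))"

definition score :: "point list \<Rightarrow> nat list \<Rightarrow> point list \<Rightarrow> nat" where
  "score P h qs = (\<Sum>i \<in> {i. i < length P \<and> P ! i \<in> set qs}. h ! i)"

definition maxscore :: "point list \<Rightarrow> nat list \<Rightarrow> point \<Rightarrow> nat" where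
  "maxscore P h q = Max {score P h qs | qs. NE_path qs \<and> hd qs = q}"

definition young3 :: "point list \<Rightarrow> nat list \<Rightarrow> (nat \<times> nat \<times> nat) set" where
  "young3 P h = {(x, y, z). z < maxscore P h (x, y)}"

definition fp_le :: "point list \<Rightarrow> point list \<Rightarrow> nat list \<Rightarrow> bool" where
  "fp_le P' P h \<longleftrightarrow> young3 P' h \<subseteq> young3 P h"

definition fp_less :: "point list \<Rightarrow> point list \<Rightarrow> nat list \<Rightarrow> bool" where
  "fp_less P' P h \<longleftrightarrow> fp_le P' P h \<and> young3 P' h \<noteq> young3 P h"

end

theory Submission
  imports Defs "HOL-Library.Product_Order"
begin

text \<open>Order \<open>\<nat>\<^sup>2\<close> componentwise. The points of a North-East path form a chain, and
  conversely every finite chain above \<open>q\<close> lies on some path from \<open>q\<close>. Let \<open>a = p\<^sub>i\<close> and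
  \<open>a' = a - (1,0)\<close>. The hypothesis says that no other \<open>p\<^sub>k\<close> lies in
  \<open>{c. a' \<le> c} - {c. a \<le> c}\<close>, so the points of \<open>P\<close> on an optimal path for \<open>P'\<close> through
  \<open>a'\<close>, together with \<open>a\<close>, still form a chain above the origin; a path through all of them
  scores at least as much for \<open>P\<close>. Hence \<open>maxscore P' \<le> maxscore P\<close> everywhere. At \<open>a\<close>
  itself no path reaches \<open>a'\<close>, so the optimal \<open>P'\<close>-path there loses \<open>h\<^sub>i > 0\<close> compared
  with \<open>P\<close>.\<close>

lemma NE_path_Nil [simp]: "\<not> NE_path []"
  by (simp add: NE_path_def)

lemma NE_path_singleton [simp]: "NE_path [p]"
  by (simp add: NE_path_def)

lemma NE_path_Cons_Cons [simp]:
  "NE_path (p # q # qs) \<longleftrightarrow>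
     (q = (fst p + 1, snd p) \<or> q = (fst p, snd p + 1)) \<and> NE_path (q # qs)"
  by (auto simp: NE_path_def nth_Cons split: nat.splits)

lemma NE_path_sorted: "NE_path qs \<Longrightarrow> sorted_wrt (\<le>) qs"
  by (induction qs rule: induct_list012) (auto simp: less_eq_prod_def)

lemma NE_path_hd_le: "NE_path qs \<Longrightarrow> c \<in> set qs \<Longrightarrow> hd qs \<le> c"
  by (cases qs) (auto dest: NE_path_sorted)

lemma NE_path_chain: "NE_path qs \<Longrightarrow> Complete_Partial_Order.chain (\<le>) (set qs)"
  by (rule chainI)
    (metis NE_path_sorted in_set_conv_nth linorder_neq_iff order.refl sorted_wrt_nth_less)

lemma NE_path_extend_below:
  assumes "NE_path qs" and "p \<le> hd qs"
  shows "\<exists>qs'. NE_path qs' \<and> hd qs' = p \<and> set qs \<subseteq> set qs'"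
  using assms(2)
proof (induction "(fst (hd qs) - fst p) + (snd (hd qs) - snd p)" arbitrary: p rule: less_induct)
  case less
  show ?case
  proof (cases "p = hd qs")
    case True
    then show ?thesis using assms(1) by blast
  next
    case False
    define p1 where "p1 = (if fst p < fst (hd qs) then (fst p + 1, snd p) else (fst p, snd p + 1))"
    have "p1 \<le> hd qs"
      and "(fst (hd qs) - fst p1) + (snd (hd qs) - snd p1) < (fst (hd qs) - fst p) + (snd (hd qs) - snd p)"
      using less.prems False by (auto simp: p1_def less_eq_prod_def prod_eq_iff)
    then obtain qs1 where "NE_path qs1" "hd qs1 = p1" "set qs \<subseteq> set qs1"
      using less.hyps by blast
    then have "NE_path (p # qs1)"
      by (cases qs1) (auto simp: p1_def split: if_splits)
    then show ?thesis using \<open>set qs \<subseteq> set qs1\<close> by force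
  qed
qed

lemma NE_path_through_chain:
  assumes "finite C" and "Complete_Partial_Order.chain (\<le>) C" and "\<forall>c\<in>C. q \<le> c"
  shows "\<exists>qs. NE_path qs \<and> hd qs = q \<and> C \<subseteq> set qs"
  using assms
proof (induction C arbitrary: q rule: finite_psubset_induct)
  case (psubset C)
  show ?case
  proof (cases "C = {}")
    case True
    then show ?thesis using NE_path_singleton by fastforce
  next
    case False
    then obtain m where "m \<in> C" and "\<forall>c\<in>C. c \<le> m \<longrightarrow> m = c"
      using finite_has_minimal[OF psubset.hyps(1)] by blast
    then have "\<forall>c\<in>C - {m}. m \<le> c"
      using psubset.prems(1) by (auto dest: chainD)
    moreover have "Complete_Partial_Order.chain (\<le>) (C - {m})"
      using psubset.prems(1) by (rule chain_subset) blast
    ultimately obtain qs where "NE_path qs" "hd qs = m" "C - {m} \<subseteq> set qs"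
      using psubset.IH[of "C - {m}" m] \<open>m \<in> C\<close> by blast
    moreover have "m \<in> set qs"
      using \<open>NE_path qs\<close> \<open>hd qs = m\<close> by (metis NE_path_Nil hd_in_set)
    moreover have "q \<le> m"
      using psubset.prems(2) \<open>m \<in> C\<close> by blast
    ultimately show ?thesis
      using NE_path_extend_below[of qs q] by blast
  qed
qed

lemma finite_scores: "finite {score P h qs | qs. NE_path qs \<and> hd qs = q}"
  by (rule finite_subset[of _ "{..sum ((!) h) {..<length P}}"])
    (auto simp: score_def intro: sum_mono2)

lemma maxscore_ge: "NE_path qs \<Longrightarrow> hd qs = q \<Longrightarrow> score P h qs \<le> maxscore P h q"
  unfolding maxscore_def by (rule Max_ge[OF finite_scores]) blast

lemma maxscore_attained:
  obtains qs where "NE_path qs" "hd qs = q" "maxscore P h q = score P h qs"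
proof -
  have "score P h [q] \<in> {score P h qs | qs. NE_path qs \<and> hd qs = q}"
    by force
  then show ?thesis
    using that Max_in[OF finite_scores] unfolding maxscore_def by blast
qed

lemma score_update_le:
  assumes "i < length P"
    and "\<forall>k<length P. k \<noteq> i \<longrightarrow> P ! k \<in> set qs \<longrightarrow> P ! k \<in> set qs'"
    and "a \<in> set qs \<longrightarrow> P ! i \<in> set qs'"
  shows "score (P[i := a]) h qs \<le> score P h qs'"
  unfolding score_def using assms by (intro sum_mono2) (auto simp: nth_list_update split: if_splits)

lemma score_update_add_le:
  assumes "i < length P" and "P ! i \<in> set qs" and "a \<notin> set qs"
  shows "score (P[i := a]) h qs + h ! i \<le> score P h qs"
proof -
  let ?I = "{k. k < length P \<and> P ! k \<in> set qs}"
  have "score (P[i := a]) h qs \<le> sum ((!) h) (?I - {i})"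
    unfolding score_def using assms by (intro sum_mono2) (auto simp: nth_list_update split: if_splits)
  also have "\<dots> + h ! i = score P h qs"
    unfolding score_def using assms by (simp add: sum.remove)
  finally show ?thesis by simp
qed

lemma maxscore_update_le:
  assumes "i < length P" and "a \<le> P ! i"
    and gap: "\<forall>k<length P. k \<noteq> i \<longrightarrow> a \<le> P ! k \<longrightarrow> P ! i \<le> P ! k"
  shows "maxscore (P[i := a]) h q \<le> maxscore P h q"
proof -
  obtain qs where qs: "NE_path qs" "hd qs = q" "maxscore (P[i := a]) h q = score (P[i := a]) h qs"
    using maxscore_attained by blast
  have "\<exists>qs'. NE_path qs' \<and> hd qs' = q \<and>
    (\<forall>k<length P. k \<noteq> i \<longrightarrow> P ! k \<in> set qs \<longrightarrow> P ! k \<in> set qs') \<and> (a \<in> set qs \<longrightarrow> P ! i \<in> set qs')"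
  proof (cases "a \<in> set qs")
    case False
    then show ?thesis using qs by blast
  next
    case True
    define S where "S = {P ! k | k. k < length P \<and> k \<noteq> i \<and> P ! k \<in> set qs}"
    have "S \<subseteq> set qs" by (auto simp: S_def)
    have comparable: "c \<le> P ! i \<or> P ! i \<le> c" if "c \<in> S" for c
    proof -
      obtain k where k: "k < length P" "k \<noteq> i" "c = P ! k" "c \<in> set qs"
        using \<open>c \<in> S\<close> by (auto simp: S_def)
      then have "c \<le> a \<or> a \<le> c" using chainD[OF NE_path_chain[OF qs(1)] _ True] by blast
      then show ?thesis using k gap \<open>a \<le> P ! i\<close> by (auto dest: order_trans)
    qed
    have "Complete_Partial_Order.chain (\<le>) (insert (P ! i) S)"
    proof (rule chainI)
      fix c d assume "c \<in> insert (P ! i) S" "d \<in> insert (P ! i) S"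
      then show "c \<le> d \<or> d \<le> c"
        using comparable chainD[OF NE_path_chain[OF qs(1)]] \<open>S \<subseteq> set qs\<close> by blast
    qed
    moreover have "finite (insert (P ! i) S)"
      using \<open>S \<subseteq> set qs\<close> finite_subset by blast
    moreover have "q \<le> P ! i"
      using NE_path_hd_le[OF qs(1) True] qs(2) \<open>a \<le> P ! i\<close> by simp
    then have "\<forall>c\<in>insert (P ! i) S. q \<le> c"
      using NE_path_hd_le[OF qs(1)] qs(2) \<open>S \<subseteq> set qs\<close> by blast
    ultimately obtain qs' where "NE_path qs'" "hd qs' = q" "insert (P ! i) S \<subseteq> set qs'"
      using NE_path_through_chain by blast
    then show ?thesis by (auto simp: S_def)
  qed
  then obtain qs' where "NE_path qs'" "hd qs' = q" and "score (P[i := a]) h qs \<le> score P h qs'"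
    using score_update_le[OF \<open>i < length P\<close>] by blast
  then show ?thesis using qs maxscore_ge by (metis order_trans)
qed

lemma maxscore_update_less:
  assumes "i < length P" and "0 < h ! i" and "\<not> P ! i \<le> a"
  shows "maxscore (P[i := a]) h (P ! i) < maxscore P h (P ! i)"
proof -
  obtain qs where qs: "NE_path qs" "hd qs = P ! i"
    "maxscore (P[i := a]) h (P ! i) = score (P[i := a]) h qs"
    using maxscore_attained by blast
  have "P ! i \<in> set qs" using qs by (metis NE_path_Nil hd_in_set)
  moreover have "a \<notin> set qs" using NE_path_hd_le[OF qs(1)] qs(2) assms(3) by metis
  ultimately have "score (P[i := a]) h qs + h ! i \<le> score P h qs"
    using score_update_add_le[OF assms(1)] by blast
  then show ?thesis using qs maxscore_ge[OF qs(1,2), of P h] assms(2) by linarith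
qed

lemma young3_psubset:
  assumes "\<And>q. maxscore P' h q \<le> maxscore P h q" and "maxscore P' h q\<^sub>0 < maxscore P h q\<^sub>0"
  shows "young3 P' h \<subset> young3 P h"
proof
  show "young3 P' h \<subseteq> young3 P h"
    unfolding young3_def using assms(1) by (auto intro: less_le_trans)
  have "(fst q\<^sub>0, snd q\<^sub>0, maxscore P' h q\<^sub>0) \<in> young3 P h - young3 P' h"
    using assms(2) by (simp add: young3_def)
  then show "young3 P' h \<noteq> young3 P h" by blast
qed

theorem lemma5p1:
  fixes P :: "point list" and h :: "nat list" and i :: nat
  assumes "floor_plan P h"
    and "i < length P"
    and "fst (P ! i) > 0"
    and "\<forall>j < length P. fst (P ! j) = fst (P ! i) - 1 \<longrightarrow> snd (P ! j) < snd (P ! i)"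
  shows "fp_less (P[i := (fst (P ! i) - 1, snd (P ! i))]) P h
         \<and> young3 (P[i := (fst (P ! i) - 1, snd (P ! i))]) h \<subset> young3 P h"
proof -
  let ?a = "(fst (P ! i) - 1, snd (P ! i))"
  have "?a \<le> P ! i" and "\<not> P ! i \<le> ?a"
    using assms(3) by (auto simp: less_eq_prod_def)
  have "\<forall>k<length P. k \<noteq> i \<longrightarrow> ?a \<le> P ! k \<longrightarrow> P ! i \<le> P ! k"
    using assms(4) by (fastforce simp: less_eq_prod_def)
  with assms(2) \<open>?a \<le> P ! i\<close> have "maxscore (P[i := ?a]) h q \<le> maxscore P h q" for q
    by (rule maxscore_update_le)
  moreover have "0 < h ! i"
    using assms(1,2) by (simp add: floor_plan_def)
  with assms(2) \<open>\<not> P ! i \<le> ?a\<close> have "maxscore (P[i := ?a]) h (P ! i) < maxscore P h (P ! i)"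
    by (intro maxscore_update_less)
  ultimately have "young3 (P[i := ?a]) h \<subset> young3 P h"
    by (rule young3_psubset)
  then show ?thesis
    unfolding fp_less_def fp_le_def by blast
qed

end
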